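(* Let $n\ge1$ and let $H:[0,\infty)^n\to[0,\infty)$ be continuous, non-decreasing and bounded from above by the minimum, i.e. $H(x_1,\dots,x_n)\le\min(x_1,\dots,x_n)$. Let $\omega_j,\xi_j\in(0,\infty)$, $j=0,1,\dots,n$, be such that $x^{1/(\xi_0\omega_0)}\le x\le x^{1/(\xi_i\omega_i)}$ and $x\ge x^{\omega_i/\omega_0}$ for all $x\in[0,\infty)$ and $i=1,\dots,n$. Then for every measurable space $(X,\mathcal{A})$, every comonotone system $f_1,\dots,f_n\in\mathcal{F}^{(X,\mathcal{A})}$ and every monotone measure $m\in\mathcal{M}^{(X,\mathcal{A})}$ with $\mathbf{Su}(m,f_i^{\xi_i})<\infty$ for $i=1,\dots,n$, \[ \big[\mathbf{Su}\big(m,(H(f_1,\dots,f_n))^{\xi_0}\big)\big]^{\omega_0}\ \ge\ H\Big[\big(\mathbf{Su}(m,f_1^{\xi_1})\big)^{\omega_1},\dots,\big(\mathbf{Su}(m,f_n^{\xi_n})\big)^{\omega_n}\Big]. \]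
   Context: A monotone measure on $(X,\mathcal{A})$ is $m:\mathcal{A}\to[0,\infty]$ with $m(\emptyset)=0$, $m(X)>0$, $m(A)\le m(B)$ for $A\subseteq B$; $\mathcal{M}^{(X,\mathcal{A})}$ is the set of these; $\mathcal{F}^{(X,\mathcal{A})}$ the set of $\mathcal{A}$-measurable $f:X\to[0,\infty]$. The Sugeno integral is $\mathbf{Su}(m,f)=\sup\{\min(t,m(\{f\ge t\})) : t\in(0,\infty]\}$. A comonotone system is a family of pairwise comonotone functions: $(f_i(x)-f_i(y))(f_j(x)-f_j(y))\ge0$ for all $x,y\in X$. *)

theory Defs
  imports "HOL-Analysis.Analysis"
begin

text \<open>Monotone measure on the measurable space (space M, sets M).
  Only the sigma-algebra of M is used; its own emeasure is ignored.\<close>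
definition monotone_measure :: "'a measure \<Rightarrow> ('a set \<Rightarrow> ennreal) \<Rightarrow> bool" where
  "monotone_measure M m \<longleftrightarrow>
     m {} = 0 \<and> m (space M) > 0 \<and>
     (\<forall>A\<in>sets M. \<forall>B\<in>sets M. A \<subseteq> B \<longrightarrow> m A \<le> m B)"

definition sugeno :: "'a measure \<Rightarrow> ('a set \<Rightarrow> ennreal) \<Rightarrow> ('a \<Rightarrow> ennreal) \<Rightarrow> ennreal" where
  "sugeno M m f = (SUP t\<in>{0<..}. min t (m {x\<in>space M. t \<le> f x}))"

text \<open>Comonotonicity of two [0,\<infinity>]-valued functions: (f x - f y)(g x - g y) \<ge> 0,
  i.e. f and g are never strictly oppositely ordered.\<close>
definition comonotone :: "'a set \<Rightarrow> ('a \<Rightarrow> ennreal) \<Rightarrow> ('a \<Rightarrow> ennreal) \<Rightarrow> bool" where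
  "comonotone X f g \<longleftrightarrow>
     (\<forall>x\<in>X. \<forall>y\<in>X. \<not> (f x < f y \<and> g y < g x))"

definition epow :: "ennreal \<Rightarrow> real \<Rightarrow> ennreal" where
  "epow x p = (if x = \<infinity> then \<infinity> else ennreal (enn2real x powr p))"

text \<open>Extension of H : [0,\<infinity>)^n \<rightarrow> [0,\<infinity>) to [0,\<infinity>]^n (needed to form H(f_1,...,f_n)
  when some f_i takes the value \<infinity>): the supremum of H over the truncations at level k.
  For a continuous non-decreasing H this agrees with H on finite arguments.\<close>
definition Hext :: "(real^'n \<Rightarrow> real) \<Rightarrow> ennreal^'n \<Rightarrow> ennreal" where
  "Hext H y = (SUP k::nat. ennreal (H (\<chi> i. enn2real (min (y$i) (of_nat k)))))"

end

theory Submission imports Defs begin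

text \<open>The hypotheses on the exponents force \<open>\<xi>\<^sub>0 \<omega>\<^sub>0 = 1\<close>, \<open>\<omega>\<^sub>i = \<omega>\<^sub>0\<close> and \<open>\<xi>\<^sub>i = \<xi>\<^sub>0\<close>, so with
  \<open>p = \<xi>\<^sub>0\<close> the claim becomes \<open>Su(m, H(f)\<^sup>p)\<^sup>1\<^sup>/\<^sup>p \<ge> H(b)\<close> where \<open>b\<^sub>i = Su(m, f\<^sub>i\<^sup>p)\<^sup>1\<^sup>/\<^sup>p\<close>.
  Given \<open>0 < t < H(b)\<close>, continuity of \<open>H\<close> and \<open>H \<le> min\<close> yield \<open>\<sigma>\<close> with \<open>t < \<sigma>\<^sub>i < b\<^sub>i\<close> and
  \<open>t < H(\<sigma>)\<close>. Each level set \<open>{f\<^sub>i \<ge> \<sigma>\<^sub>i}\<close> has measure above \<open>\<sigma>\<^sub>i\<^sup>p > t\<^sup>p\<close>; by comonotonicity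
  these sets form a chain, and on the smallest of them \<open>H(f) \<ge> H(\<sigma>) > t\<close> by monotonicity.
  Hence \<open>t\<^sup>p \<le> Su(m, H(f)\<^sup>p)\<close>.\<close>

lemma powr_exponent_eq_1_if_le_self:
  assumes "\<And>x::real. 0 \<le> x \<Longrightarrow> x powr a \<le> x"
  shows "a = 1"
proof -
  have "(2::real) powr a \<le> 2 powr 1" using assms[of 2] by simp
  then have "a \<le> 1" using powr_le_cancel_iff[of "2::real" a 1] by linarith
  have "(1/2::real) powr a \<le> (1/2) powr 1" using assms[of "1/2"] by simp
  then have "\<not> a < 1" using powr_less_mono'[of "1/2::real" a 1] by auto
  with \<open>a \<le> 1\<close> show ?thesis by simp
qed

lemma powr_exponent_eq_1_if_ge_self:
  assumes "\<And>x::real. 0 \<le> x \<Longrightarrow> x \<le> x powr a"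
  shows "a = 1"
proof -
  have "(2::real) powr 1 \<le> 2 powr a" using assms[of 2] by simp
  then have "1 \<le> a" using powr_le_cancel_iff[of "2::real" 1 a] by linarith
  have "(1/2::real) powr 1 \<le> (1/2) powr a" using assms[of "1/2"] by simp
  then have "\<not> 1 < a" using powr_less_mono'[of "1/2::real" 1 a] by auto
  with \<open>1 \<le> a\<close> show ?thesis by simp
qed

lemma epow_ennreal: "0 \<le> r \<Longrightarrow> epow (ennreal r) p = ennreal (r powr p)"
  by (simp add: epow_def)

lemma epow_mono:
  assumes "x \<le> y" "0 < p"
  shows "epow x p \<le> epow y p"
proof (cases "y = \<infinity>")
  case False
  then have "x \<noteq> \<infinity>" using assms(1) top.extremum_unique by auto
  have "enn2real x powr p \<le> enn2real y powr p"
    using assms False by (intro powr_mono2) (auto intro: enn2real_mono simp: top.not_eq_extremum)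
  then show ?thesis using False \<open>x \<noteq> \<infinity>\<close> by (simp add: epow_def ennreal_leI)
qed (simp add: epow_def)

lemma ennreal_powr_le_epow_iff:
  assumes "0 < a" "0 < p"
  shows "ennreal (a powr p) \<le> epow y p \<longleftrightarrow> ennreal a \<le> y"
proof (cases "y = \<infinity>")
  case False
  then obtain r where r: "y = ennreal r" "0 \<le> r" by (cases y) auto
  have "a powr p \<le> r powr p \<longleftrightarrow> a \<le> r"
    using assms r by (meson not_le powr_less_mono2 powr_mono2 less_imp_le)
  then show ?thesis using assms r by (simp add: epow_def)
qed (simp add: epow_def)

lemma borel_measurable_epow:
  assumes "g \<in> borel_measurable M"
  shows "(\<lambda>x. epow (g x) p) \<in> borel_measurable M"
  unfolding epow_def using assms by measurable

lemma borel_measurable_vec_lambda: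
  fixes g :: "'n::finite \<Rightarrow> 'a \<Rightarrow> real"
  assumes "\<And>i. g i \<in> borel_measurable M"
  shows "(\<lambda>x. \<chi> i. g i x) \<in> borel_measurable M"
proof (rule borel_measurable_euclidean_space[THEN iffD2], intro ballI)
  fix b :: "real^'n" assume "b \<in> Basis"
  then obtain i where b: "b = axis i 1" unfolding Basis_vec_def by auto
  have "(\<lambda>x. (\<chi> i. g i x) \<bullet> b) = g i" unfolding b by (simp add: inner_axis)
  then show "(\<lambda>x. (\<chi> i. g i x) \<bullet> b) \<in> borel_measurable M" using assms by simp
qed

lemma less_sugeno_imp_less_level_set:
  assumes "ennreal r < sugeno M m g" "g \<in> borel_measurable M" "monotone_measure M m"
  shows "ennreal r < m {x\<in>space M. ennreal r \<le> g x}"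
proof -
  obtain t where t: "0 < t" "ennreal r < min t (m {x\<in>space M. t \<le> g x})"
    using assms(1) unfolding sugeno_def less_SUP_iff by auto
  have "{x\<in>space M. t \<le> g x} \<subseteq> {x\<in>space M. ennreal r \<le> g x}"
    using t by auto
  moreover have "{x\<in>space M. t \<le> g x} \<in> sets M" "{x\<in>space M. ennreal r \<le> g x} \<in> sets M"
    using assms(2) by measurable
  ultimately have "m {x\<in>space M. t \<le> g x} \<le> m {x\<in>space M. ennreal r \<le> g x}"
    using assms(3) unfolding monotone_measure_def by blast
  then show ?thesis using t by (auto intro: order.strict_trans2)
qed

lemma le_sugeno:
  assumes "0 < t" "t \<le> m {x\<in>space M. t \<le> g x}"
  shows "t \<le> sugeno M m g"
  unfolding sugeno_def by (rule SUP_upper2[of t]) (use assms in auto)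

lemma comonotone_level_sets_nested:
  assumes "comonotone X f g"
  shows "{x\<in>X. a \<le> f x} \<subseteq> {x\<in>X. b \<le> g x} \<or> {x\<in>X. b \<le> g x} \<subseteq> {x\<in>X. a \<le> f x}"
proof (rule ccontr)
  assume "\<not> ?thesis"
  then obtain x y where "x \<in> X" "y \<in> X" "a \<le> f x" "\<not> b \<le> g x" "b \<le> g y" "\<not> a \<le> f y"
    by blast
  then have "f y < f x" "g x < g y" by (auto simp: not_le intro: order.strict_trans2)
  then show False using assms \<open>x \<in> X\<close> \<open>y \<in> X\<close> unfolding comonotone_def by blast
qed

lemma finite_chain_has_least:
  fixes A :: "'i::finite \<Rightarrow> 'a set"
  assumes "\<And>i j. A i \<subseteq> A j \<or> A j \<subseteq> A i"
  obtains k where "\<And>i. A k \<subseteq> A i"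
proof -
  obtain k where minimal: "\<And>T. T \<in> range A \<Longrightarrow> T \<subseteq> A k \<Longrightarrow> A k = T"
    using finite_has_minimal[of "range A"] by auto
  have "A k \<subseteq> A i" for i
    using assms[of k i] minimal[of "A i"] by auto
  then show thesis by (rule that)
qed

lemma ennreal_le_Hext:
  fixes H :: "real^'n \<Rightarrow> real"
  assumes H_mono: "\<And>x y. (\<forall>i. 0 \<le> x$i) \<Longrightarrow> (\<forall>i. x$i \<le> y$i) \<Longrightarrow> H x \<le> H y"
    and nonneg: "\<And>i. 0 \<le> \<sigma>$i" and below: "\<And>i. ennreal (\<sigma>$i) \<le> y$i"
  shows "ennreal (H \<sigma>) \<le> Hext H y"
proof -
  define K where "K = nat \<lceil>\<Sum>i\<in>UNIV. \<sigma>$i\<rceil>"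
  have "\<sigma>$i \<le> real K" for i
  proof -
    have "\<sigma>$i \<le> (\<Sum>i\<in>UNIV. \<sigma>$i)" by (rule member_le_sum) (auto simp: nonneg)
    then show ?thesis unfolding K_def by linarith
  qed
  then have "ennreal (\<sigma>$i) \<le> min (y$i) (of_nat K)" for i
    using below[of i] by (simp add: ennreal_of_nat_eq_real_of_nat ennreal_leI)
  then have "\<sigma>$i \<le> enn2real (min (y$i) (of_nat K))" for i
    using nonneg[of i] enn2real_mono[of "ennreal (\<sigma>$i)" "min (y$i) (of_nat K)"]
    by (simp add: min.strict_coboundedI2 ennreal_of_nat_eq_real_of_nat)
  then have "H \<sigma> \<le> H (\<chi> i. enn2real (min (y$i) (of_nat K)))"
    by (intro H_mono) (auto simp: nonneg)
  also have "ennreal \<dots> \<le> Hext H y"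
    unfolding Hext_def by (rule SUP_upper) simp
  finally show ?thesis by (simp add: ennreal_leI order_trans)
qed

lemma borel_measurable_Hext:
  fixes H :: "real^'n \<Rightarrow> real" and f :: "'n \<Rightarrow> 'a \<Rightarrow> ennreal"
  assumes H_cont: "continuous_on {x. \<forall>i. 0 \<le> x$i} H"
    and meas: "\<And>i. f i \<in> borel_measurable M"
  shows "(\<lambda>x. Hext H (\<chi> i. f i x)) \<in> borel_measurable M"
proof -
  \<comment> \<open>\<open>H\<close> is only continuous on the orthant, so first extend it continuously to all of \<open>\<real>\<^sup>n\<close>.\<close>
  define H' where "H' y = H (\<chi> i. max 0 (y$i))" for y :: "real^'n"
  have "continuous_on UNIV (\<lambda>y::real^'n. \<chi> i. max 0 (y$i))"
    by (intro continuous_on_vec_lambda continuous_on_max continuous_on_const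
        continuous_on_component continuous_on_id)
  then have H'_cont: "continuous_on UNIV H'"
    unfolding H'_def by (rule continuous_on_compose2[OF H_cont]) auto
  have Hext_eq: "Hext H (\<chi> i. f i x) = (SUP k. ennreal (H' (\<chi> i. enn2real (min (f i x) (of_nat k)))))"
    for x unfolding Hext_def H'_def by (simp add: max_absorb2)
  have "(\<lambda>x. \<chi> i. enn2real (min (f i x) (of_nat k))) \<in> borel_measurable M" for k
    using meas by (intro borel_measurable_vec_lambda) measurable
  then have "(\<lambda>x. H' (\<chi> i. enn2real (min (f i x) (of_nat k)))) \<in> borel_measurable M" for k
    by (rule borel_measurable_continuous_on[OF H'_cont])
  then show ?thesis
    unfolding Hext_eq by (intro borel_measurable_SUP measurable_compose[OF _ measurable_ennreal]) auto
qed

lemma continuous_on_orthant_approx_below: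
  fixes H :: "real^'n \<Rightarrow> real"
  assumes H_cont: "continuous_on {x. \<forall>i. 0 \<le> x$i} H"
    and "0 \<le> t" "\<And>i. t < b$i" "t < H b"
  obtains \<sigma> where "\<And>i. t < \<sigma>$i" "\<And>i. \<sigma>$i < b$i" "t < H \<sigma>"
proof -
  define s where "s k = (\<chi> i. b$i - (b$i - t) / of_nat (k + 2))" for k :: nat
  have s_between: "t < s k $ i \<and> s k $ i < b$i" for k i
  proof -
    have "0 < b$i - t" using assms(3)[of i] by simp
    then have "0 < (b$i - t) / of_nat (k + 2)" "(b$i - t) / of_nat (k + 2) < b$i - t"
      by (auto simp: divide_less_eq)
    then show ?thesis unfolding s_def by simp
  qed
  have "(\<lambda>k. (b$i - t) / of_nat (k + 2)) \<longlonglongrightarrow> 0" for i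
    using LIMSEQ_ignore_initial_segment[OF lim_const_over_n, of _ 2] by simp
  then have "s \<longlonglongrightarrow> (\<chi> i. b$i - 0)"
    unfolding s_def by (intro tendsto_vec_lambda tendsto_diff tendsto_const)
  then have "s \<longlonglongrightarrow> b" by simp
  moreover have "\<forall>i. 0 \<le> s k $ i" for k
    using s_between \<open>0 \<le> t\<close> by (meson less_imp_le order_trans)
  moreover have "\<forall>i. 0 \<le> b$i"
    using assms(3) \<open>0 \<le> t\<close> by (meson less_imp_le order_trans)
  ultimately have "(\<lambda>k. H (s k)) \<longlonglongrightarrow> H b"
    by (intro continuous_on_tendsto_compose[OF H_cont]) auto
  then have "eventually (\<lambda>k. t < H (s k)) sequentially"
    using assms(4) by (rule order_tendstoD(1))
  then obtain k where "t < H (s k)"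
    unfolding eventually_sequentially by auto
  with s_between show thesis by (intro that) auto
qed

lemma ennreal_powr_le_sugeno_Hext:
  fixes H :: "real^'n \<Rightarrow> real" and f :: "'n \<Rightarrow> 'a \<Rightarrow> ennreal"
  assumes H_cont: "continuous_on {x. \<forall>i. 0 \<le> x$i} H"
    and H_mono: "\<And>x y. (\<forall>i. 0 \<le> x$i) \<Longrightarrow> (\<forall>i. x$i \<le> y$i) \<Longrightarrow> H x \<le> H y"
    and H_min: "\<And>x i. (\<forall>j. 0 \<le> x$j) \<Longrightarrow> H x \<le> x$i"
    and meas: "\<And>i. f i \<in> borel_measurable M"
    and comon: "\<And>i j. comonotone (space M) (f i) (f j)"
    and mm: "monotone_measure M m"
    and "0 < p" "0 < t"
    and b_nonneg: "\<And>i. 0 \<le> b$i"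
    and b_le: "\<And>i. ennreal (b$i powr p) \<le> sugeno M m (\<lambda>x. epow (f i x) p)"
    and t_less: "t < H b"
  shows "ennreal (t powr p) \<le> sugeno M m (\<lambda>x. epow (Hext H (\<chi> i. f i x)) p)"
proof -
  have t_b: "t < b$i" for i using H_min[of b i] b_nonneg t_less by auto
  have "0 \<le> t" using \<open>0 < t\<close> by simp
  then obtain \<sigma> where \<sigma>: "\<And>i. t < \<sigma>$i" "\<And>i. \<sigma>$i < b$i" "t < H \<sigma>"
    using continuous_on_orthant_approx_below[OF H_cont _ t_b t_less] by blast
  have \<sigma>_pos: "0 < \<sigma>$i" for i using \<sigma>(1)[of i] \<open>0 < t\<close> by simp
  define A where "A i = {x\<in>space M. ennreal (\<sigma>$i) \<le> f i x}" for i
  have A_sets: "A i \<in> sets M" for i unfolding A_def using meas[of i] by measurable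
  have m_A: "ennreal (\<sigma>$i powr p) < m (A i)" for i
  proof -
    have "\<sigma>$i powr p < b$i powr p"
      using \<sigma>(2)[of i] \<sigma>_pos[of i] \<open>0 < p\<close> by (intro powr_less_mono2) auto
    then have "ennreal (\<sigma>$i powr p) < ennreal (b$i powr p)"
      using \<sigma>_pos[of i] by (intro ennreal_lessI) auto
    also have "\<dots> \<le> sugeno M m (\<lambda>x. epow (f i x) p)" by (rule b_le)
    finally have "ennreal (\<sigma>$i powr p) < sugeno M m (\<lambda>x. epow (f i x) p)" .
    from less_sugeno_imp_less_level_set[OF this borel_measurable_epow[OF meas] mm]
    show ?thesis
      unfolding A_def ennreal_powr_le_epow_iff[OF \<sigma>_pos \<open>0 < p\<close>] .
  qed
  have "A i \<subseteq> A j \<or> A j \<subseteq> A i" for i j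
    unfolding A_def by (rule comonotone_level_sets_nested[OF comon])
  then obtain k where A_k: "\<And>i. A k \<subseteq> A i"
    using finite_chain_has_least by blast
  define B where "B = {x\<in>space M. ennreal (t powr p) \<le> epow (Hext H (\<chi> i. f i x)) p}"
  have B_sets: "B \<in> sets M"
    unfolding B_def using borel_measurable_epow[OF borel_measurable_Hext[OF H_cont meas]]
    by measurable
  have "A k \<subseteq> B"
  proof
    fix x assume "x \<in> A k"
    then have "x \<in> space M" "ennreal (\<sigma>$i) \<le> (\<chi> i. f i x)$i" for i
      using A_k unfolding A_def by auto
    then have "ennreal (H \<sigma>) \<le> Hext H (\<chi> i. f i x)"
      by (intro ennreal_le_Hext[OF H_mono]) (auto simp: \<sigma>_pos less_imp_le)
    moreover have "ennreal t \<le> ennreal (H \<sigma>)"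
      using \<sigma>(3) by (simp add: ennreal_leI)
    ultimately have "ennreal t \<le> Hext H (\<chi> i. f i x)" by simp
    then show "x \<in> B"
      unfolding B_def using \<open>x \<in> space M\<close> ennreal_powr_le_epow_iff[OF \<open>0 < t\<close> \<open>0 < p\<close>] by simp
  qed
  then have "m (A k) \<le> m B"
    using mm A_sets B_sets unfolding monotone_measure_def by blast
  have "t powr p < \<sigma>$k powr p"
    using \<sigma>(1)[of k] \<open>0 < t\<close> \<open>0 < p\<close> by (intro powr_less_mono2) auto
  then have "ennreal (t powr p) \<le> ennreal (\<sigma>$k powr p)" by (simp add: ennreal_leI)
  also have "\<dots> \<le> m (A k)" using m_A[of k] by simp
  also have "\<dots> \<le> m B" by fact
  finally have "ennreal (t powr p) \<le> m B" .
  then show ?thesis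
    unfolding B_def using \<open>0 < t\<close> by (intro le_sugeno) auto
qed

lemma ennreal_le_of_forall_less:
  assumes "\<And>t. 0 < t \<Longrightarrow> t < c \<Longrightarrow> ennreal t \<le> y"
  shows "ennreal c \<le> y"
proof (cases "0 < c")
  case True
  show ?thesis
  proof (rule dense_le_bounded[of 0])
    fix w assume w: "0 < w" "w < ennreal c"
    then obtain t where "w = ennreal t" "0 \<le> t" by (cases w) auto
    with w True show "w \<le> y" by (auto intro: assms simp: ennreal_less_iff)
  qed (use True in simp)
qed (simp add: not_less ennreal_neg)

theorem corollary3p7:
  fixes H :: "real^'n \<Rightarrow> real"
    and \<omega> \<xi> :: "'n \<Rightarrow> real" and \<omega>0 \<xi>0 :: real
    and M :: "'a measure" and m :: "'a set \<Rightarrow> ennreal"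
    and f :: "'n \<Rightarrow> 'a \<Rightarrow> ennreal"
  assumes H_cont: "continuous_on {x. \<forall>i. 0 \<le> x$i} H"
    and H_nonneg: "\<And>x. (\<forall>i. 0 \<le> x$i) \<Longrightarrow> 0 \<le> H x"
    and H_mono: "\<And>x y. (\<forall>i. 0 \<le> x$i) \<Longrightarrow> (\<forall>i. x$i \<le> y$i) \<Longrightarrow> H x \<le> H y"
    and H_min: "\<And>x i. (\<forall>j. 0 \<le> x$j) \<Longrightarrow> H x \<le> x$i"
    and pos: "\<omega>0 > 0" "\<xi>0 > 0" "\<And>i. \<omega> i > 0" "\<And>i. \<xi> i > 0"
    and pw0: "\<And>x::real. 0 \<le> x \<Longrightarrow> x powr (1 / (\<xi>0 * \<omega>0)) \<le> x"
    and pwi: "\<And>(x::real) i. 0 \<le> x \<Longrightarrow> x \<le> x powr (1 / (\<xi> i * \<omega> i))"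
    and pwr: "\<And>(x::real) i. 0 \<le> x \<Longrightarrow> x powr (\<omega> i / \<omega>0) \<le> x"
    and meas: "\<And>i. f i \<in> borel_measurable M"
    and comon: "\<And>i j. comonotone (space M) (f i) (f j)"
    and mm: "monotone_measure M m"
    and fin: "\<And>i. sugeno M m (\<lambda>x. epow (f i x) (\<xi> i)) < \<infinity>"
  shows "epow (sugeno M m (\<lambda>x. epow (Hext H (\<chi> i. f i x)) \<xi>0)) \<omega>0
         \<ge> ennreal (H (\<chi> i. enn2real (epow (sugeno M m (\<lambda>x. epow (f i x) (\<xi> i))) (\<omega> i))))"
proof -
  have "1 / (\<xi>0 * \<omega>0) = 1" by (rule powr_exponent_eq_1_if_le_self) (rule pw0)
  then have \<omega>0_eq: "\<omega>0 = 1 / \<xi>0" using pos(2) by (simp add: field_simps)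
  have \<omega>_eq: "\<omega> i = \<omega>0" for i
  proof -
    have "\<omega> i / \<omega>0 = 1" by (rule powr_exponent_eq_1_if_le_self) (rule pwr)
    then show ?thesis using pos(1) by (simp add: field_simps)
  qed
  have \<xi>_eq: "\<xi> i = \<xi>0" for i
  proof -
    have "1 / (\<xi> i * \<omega> i) = 1" by (rule powr_exponent_eq_1_if_ge_self) (rule pwi)
    then show ?thesis using \<omega>_eq[of i] \<omega>0_eq pos(2) by (simp add: field_simps)
  qed
  define S where "S i = sugeno M m (\<lambda>x. epow (f i x) \<xi>0)" for i
  define b where "b = (\<chi> i. enn2real (epow (S i) \<omega>0))"
  have "b$i powr \<xi>0 = enn2real (S i)" for i
    using fin[of i] pos(2) unfolding b_def S_def \<xi>_eq \<omega>0_eq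
    by (simp add: epow_def powr_powr top.not_eq_extremum)
  then have b_le: "ennreal (b$i powr \<xi>0) \<le> S i" for i by (simp add: ennreal_enn2real_if)
  have b_nonneg: "0 \<le> b$i" for i unfolding b_def by simp
  have "ennreal t \<le> epow (sugeno M m (\<lambda>x. epow (Hext H (\<chi> i. f i x)) \<xi>0)) \<omega>0"
    if "0 < t" "t < H b" for t
  proof -
    have "ennreal (t powr \<xi>0) \<le> sugeno M m (\<lambda>x. epow (Hext H (\<chi> i. f i x)) \<xi>0)"
      by (rule ennreal_powr_le_sugeno_Hext[OF H_cont H_mono H_min meas comon mm pos(2) that(1)
            b_nonneg b_le[unfolded S_def] that(2)])
    from epow_mono[OF this pos(1)] show ?thesis
      using that(1) pos(2) unfolding \<omega>0_eq by (simp add: epow_ennreal powr_powr)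
  qed
  then show ?thesis
    unfolding b_def S_def \<xi>_eq \<omega>_eq by (rule ennreal_le_of_forall_less)
qed

end
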